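(* Let $\mathcal{T}$ be a $\operatorname{Hom}$-finite Krull–Schmidt triangulated category over an algebraically closed field, and let $(\mathcal{I},\mathcal{R})$ be an ideal torsion pair in $\mathcal{T}$. Then (1) $\mathcal{I}=\mathrm{CoGh}_{\mathcal{R}}$ and $\mathcal{R}=\mathrm{Gh}_{\mathcal{I}}$; (2) $\mathcal{I}$ is contravariantly finite and $\mathcal{R}$ is covariantly finite.
   Context: Composition of $f:X\to Y$, $g:Y\to Z$ is $gf$. An ideal: subgroups $\mathcal{I}(X,Y)\subseteq\operatorname{Hom}(X,Y)$ closed under composition with arbitrary morphisms. $\mathrm{Gh}_{\mathcal{I}}=\{f: fi=0\text{ for all composable } i\in\mathcal{I}\}$, $\mathrm{CoGh}_{\mathcal{I}}=\{f: if=0\text{ for all composable } i\in\mathcal{I}\}$. A pair $(\mathcal{I},\mathcal{R})$ of ideals is an ideal torsion pair if (a) for all $i:S\to T$ in $\mathcal{I}$ and $r:U\to V$ in $\mathcal{R}$, $rgi=0$ for every $g:T\to U$; and (b) for each $T\in\mathcal{T}$ there is a triangle $X\xrightarrow{f}T\xrightarrow{g}Y\to X[1]$ with $f\in\mathcal{I}$ and $g\in\mathcal{R}$. $\mathcal{I}$ is contravariantly (resp. covariantly) finite if every object has a right (resp. left) $\mathcal{I}$-approximation, where a right $\mathcal{I}$-approximation of $T$ is $i:X\to T$ in $\mathcal{I}$ through which every morphism of $\mathcal{I}$ ending at $T$ factors, and left approximations are dual. *)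

theory Defs
  imports "HOL-Computational_Algebra.Polynomial"
begin

text \<open>Objects are all elements of type 'o, morphisms all elements of type 'm.
  Composition: for f : X -> Y and g : Y -> Z, comp C g f = gf.\<close>

record ('o,'m,'k) tcat =
  dom :: "'m \<Rightarrow> 'o"
  cod :: "'m \<Rightarrow> 'o"
  ident :: "'o \<Rightarrow> 'm"
  comp :: "'m \<Rightarrow> 'm \<Rightarrow> 'm"
  zer :: "'o \<Rightarrow> 'o \<Rightarrow> 'm"
  add :: "'m \<Rightarrow> 'm \<Rightarrow> 'm"
  neg :: "'m \<Rightarrow> 'm"
  smul :: "'k \<Rightarrow> 'm \<Rightarrow> 'm"
  shO :: "'o \<Rightarrow> 'o"
  shM :: "'m \<Rightarrow> 'm"
  dist :: "('o \<times> 'o \<times> 'o \<times> 'm \<times> 'm \<times> 'm) set"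

definition alg_closed :: "'k::field itself \<Rightarrow> bool" where
  "alg_closed _ \<longleftrightarrow> (\<forall>p :: 'k poly. degree p \<ge> 1 \<longrightarrow> (\<exists>x. poly p x = 0))"

definition hom :: "('o,'m,'k) tcat \<Rightarrow> 'o \<Rightarrow> 'o \<Rightarrow> 'm set" where
  "hom C X Y = {f. dom C f = X \<and> cod C f = Y}"

definition is_category :: "('o,'m,'k) tcat \<Rightarrow> bool" where
  "is_category C \<longleftrightarrow>
     (\<forall>X. dom C (ident C X) = X \<and> cod C (ident C X) = X) \<and>
     (\<forall>f g. cod C f = dom C g \<longrightarrow> dom C (comp C g f) = dom C f \<and> cod C (comp C g f) = cod C g) \<and>
     (\<forall>f g h. cod C f = dom C g \<and> cod C g = dom C h \<longrightarrow>
        comp C h (comp C g f) = comp C (comp C h g) f) \<and>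
     (\<forall>f. comp C f (ident C (dom C f)) = f \<and> comp C (ident C (cod C f)) f = f)"

definition parallel :: "('o,'m,'k) tcat \<Rightarrow> 'm \<Rightarrow> 'm \<Rightarrow> bool" where
  "parallel C f g \<longleftrightarrow> dom C f = dom C g \<and> cod C f = cod C g"

definition is_klinear :: "('o,'m,'k::field) tcat \<Rightarrow> bool" where
  "is_klinear C \<longleftrightarrow> is_category C \<and>
     (\<forall>X Y. dom C (zer C X Y) = X \<and> cod C (zer C X Y) = Y) \<and>
     (\<forall>f g. parallel C f g \<longrightarrow> dom C (add C f g) = dom C f \<and> cod C (add C f g) = cod C f) \<and>
     (\<forall>f. dom C (neg C f) = dom C f \<and> cod C (neg C f) = cod C f) \<and>
     (\<forall>a f. dom C (smul C a f) = dom C f \<and> cod C (smul C a f) = cod C f) \<and>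
     (\<forall>f g h. parallel C f g \<and> parallel C g h \<longrightarrow> add C (add C f g) h = add C f (add C g h)) \<and>
     (\<forall>f g. parallel C f g \<longrightarrow> add C f g = add C g f) \<and>
     (\<forall>f. add C f (zer C (dom C f) (cod C f)) = f) \<and>
     (\<forall>f. add C f (neg C f) = zer C (dom C f) (cod C f)) \<and>
     (\<forall>a f g. parallel C f g \<longrightarrow> smul C a (add C f g) = add C (smul C a f) (smul C a g)) \<and>
     (\<forall>a b f. smul C (a + b) f = add C (smul C a f) (smul C b f)) \<and>
     (\<forall>a b f. smul C (a * b) f = smul C a (smul C b f)) \<and>
     (\<forall>f. smul C 1 f = f) \<and>
     (\<forall>f g g'. cod C f = dom C g \<and> parallel C g g' \<longrightarrow>
        comp C (add C g g') f = add C (comp C g f) (comp C g' f)) \<and>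
     (\<forall>f f' g. cod C f = dom C g \<and> parallel C f f' \<longrightarrow>
        comp C g (add C f f') = add C (comp C g f) (comp C g f')) \<and>
     (\<forall>a f g. cod C f = dom C g \<longrightarrow>
        comp C (smul C a g) f = smul C a (comp C g f) \<and> comp C g (smul C a f) = smul C a (comp C g f))"

fun msum :: "('o,'m,'k) tcat \<Rightarrow> 'o \<Rightarrow> 'o \<Rightarrow> 'm list \<Rightarrow> 'm" where
  "msum C X Y [] = zer C X Y"
| "msum C X Y (f # fs) = add C f (msum C X Y fs)"

definition lincomb :: "('o,'m,'k) tcat \<Rightarrow> 'o \<Rightarrow> 'o \<Rightarrow> ('k \<times> 'm) list \<Rightarrow> 'm" where
  "lincomb C X Y cs = msum C X Y (map (\<lambda>(a,s). smul C a s) cs)"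

definition is_dsum :: "('o,'m,'k) tcat \<Rightarrow> 'o \<Rightarrow> 'o list \<Rightarrow> bool" where
  "is_dsum C B Xs \<longleftrightarrow> (\<exists>ins projs.
     length ins = length Xs \<and> length projs = length Xs \<and>
     (\<forall>k < length Xs. ins ! k \<in> hom C (Xs ! k) B \<and> projs ! k \<in> hom C B (Xs ! k)) \<and>
     (\<forall>k < length Xs. \<forall>l < length Xs.
        comp C (projs ! k) (ins ! l) = (if k = l then ident C (Xs ! k) else zer C (Xs ! l) (Xs ! k))) \<and>
     msum C B B (map (\<lambda>k. comp C (ins ! k) (projs ! k)) [0..<length Xs]) = ident C B)"

definition is_additive :: "('o,'m,'k::field) tcat \<Rightarrow> bool" where
  "is_additive C \<longleftrightarrow> is_klinear C \<and> (\<exists>Z. is_dsum C Z []) \<and> (\<forall>X Y. \<exists>B. is_dsum C B [X, Y])"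

definition is_iso :: "('o,'m,'k) tcat \<Rightarrow> 'm \<Rightarrow> bool" where
  "is_iso C f \<longleftrightarrow> (\<exists>g. g \<in> hom C (cod C f) (dom C f) \<and>
      comp C g f = ident C (dom C f) \<and> comp C f g = ident C (cod C f))"

definition isomorphic :: "('o,'m,'k) tcat \<Rightarrow> 'o \<Rightarrow> 'o \<Rightarrow> bool" where
  "isomorphic C X Y \<longleftrightarrow> (\<exists>f \<in> hom C X Y. is_iso C f)"

definition is_shift :: "('o,'m,'k::field) tcat \<Rightarrow> bool" where
  "is_shift C \<longleftrightarrow>
     (\<forall>f. dom C (shM C f) = shO C (dom C f) \<and> cod C (shM C f) = shO C (cod C f)) \<and>
     (\<forall>X. shM C (ident C X) = ident C (shO C X)) \<and>
     (\<forall>f g. cod C f = dom C g \<longrightarrow> shM C (comp C g f) = comp C (shM C g) (shM C f)) \<and>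
     (\<forall>f g. parallel C f g \<longrightarrow> shM C (add C f g) = add C (shM C f) (shM C g)) \<and>
     (\<forall>a f. shM C (smul C a f) = smul C a (shM C f)) \<and>
     (\<forall>X Y. bij_betw (shM C) (hom C X Y) (hom C (shO C X) (shO C Y))) \<and>
     (\<forall>Y. \<exists>X. isomorphic C (shO C X) Y)"

definition is_triangle :: "('o,'m,'k) tcat \<Rightarrow> ('o \<times> 'o \<times> 'o \<times> 'm \<times> 'm \<times> 'm) \<Rightarrow> bool" where
  "is_triangle C T \<longleftrightarrow> (case T of (X,Y,Z,f,g,h) \<Rightarrow>
      f \<in> hom C X Y \<and> g \<in> hom C Y Z \<and> h \<in> hom C Z (shO C X))"

definition tri_morph :: "('o,'m,'k) tcat \<Rightarrow> ('o \<times> 'o \<times> 'o \<times> 'm \<times> 'm \<times> 'm) \<Rightarrow>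
    ('o \<times> 'o \<times> 'o \<times> 'm \<times> 'm \<times> 'm) \<Rightarrow> 'm \<Rightarrow> 'm \<Rightarrow> 'm \<Rightarrow> bool" where
  "tri_morph C T T' a b c \<longleftrightarrow> (case T of (X,Y,Z,f,g,h) \<Rightarrow> case T' of (X',Y',Z',f',g',h') \<Rightarrow>
      a \<in> hom C X X' \<and> b \<in> hom C Y Y' \<and> c \<in> hom C Z Z' \<and>
      comp C b f = comp C f' a \<and> comp C c g = comp C g' b \<and> comp C (shM C a) h = comp C h' c)"

definition is_triangulated :: "('o,'m,'k::field) tcat \<Rightarrow> bool" where
  "is_triangulated C \<longleftrightarrow> is_additive C \<and> is_shift C \<and>
     (\<forall>T \<in> dist C. is_triangle C T) \<and>
     \<comment> \<open>TR1\<close>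
     (\<forall>X Z. is_dsum C Z [] \<longrightarrow>
        (X, X, Z, ident C X, zer C X Z, zer C Z (shO C X)) \<in> dist C) \<and>
     (\<forall>T T' a b c. T \<in> dist C \<and> is_triangle C T' \<and> tri_morph C T T' a b c \<and>
        is_iso C a \<and> is_iso C b \<and> is_iso C c \<longrightarrow> T' \<in> dist C) \<and>
     (\<forall>f. \<exists>Z g h. (dom C f, cod C f, Z, f, g, h) \<in> dist C) \<and>
     \<comment> \<open>TR2\<close>
     (\<forall>X Y Z f g h. (X,Y,Z,f,g,h) \<in> dist C \<longleftrightarrow>
        (Y, Z, shO C X, g, h, neg C (shM C f)) \<in> dist C) \<and>
     \<comment> \<open>TR3\<close>
     (\<forall>X Y Z f g h X' Y' Z' f' g' h' a b.
        (X,Y,Z,f,g,h) \<in> dist C \<and> (X',Y',Z',f',g',h') \<in> dist C \<and>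
        a \<in> hom C X X' \<and> b \<in> hom C Y Y' \<and> comp C b f = comp C f' a \<longrightarrow>
        (\<exists>c. tri_morph C (X,Y,Z,f,g,h) (X',Y',Z',f',g',h') a b c)) \<and>
     \<comment> \<open>TR4 (octahedral axiom)\<close>
     (\<forall>X Y Z Z' X' Y' u v j k l i m n.
        (X,Y,Z',u,j,k) \<in> dist C \<and> (Y,Z,X',v,l,i) \<in> dist C \<and>
        (X,Z,Y',comp C v u,m,n) \<in> dist C \<longrightarrow>
        (\<exists>f g. f \<in> hom C Z' Y' \<and> g \<in> hom C Y' X' \<and>
           (Z',Y',X',f,g,comp C (shM C j) i) \<in> dist C \<and>
           comp C f j = comp C m v \<and> comp C n f = k \<and>
           comp C g m = l \<and> comp C (shM C u) n = comp C i g))"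

definition hom_finite :: "('o,'m,'k::field) tcat \<Rightarrow> bool" where
  "hom_finite C \<longleftrightarrow> (\<forall>X Y. \<exists>S. finite S \<and> S \<subseteq> hom C X Y \<and>
     (\<forall>f \<in> hom C X Y. \<exists>cs. set (map snd cs) \<subseteq> S \<and> f = lincomb C X Y cs))"

definition local_end :: "('o,'m,'k) tcat \<Rightarrow> 'o \<Rightarrow> bool" where
  "local_end C X \<longleftrightarrow> ident C X \<noteq> zer C X X \<and>
     (\<forall>f \<in> hom C X X. \<forall>g \<in> hom C X X. \<not> is_iso C f \<and> \<not> is_iso C g \<longrightarrow> \<not> is_iso C (add C f g))"

definition krull_schmidt :: "('o,'m,'k) tcat \<Rightarrow> bool" where
  "krull_schmidt C \<longleftrightarrow> (\<forall>X. \<exists>Xs. (\<forall>Y \<in> set Xs. local_end C Y) \<and> is_dsum C X Xs)"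

definition is_ideal :: "('o,'m,'k) tcat \<Rightarrow> 'm set \<Rightarrow> bool" where
  "is_ideal C I \<longleftrightarrow>
     (\<forall>X Y. zer C X Y \<in> I) \<and>
     (\<forall>f \<in> I. \<forall>g \<in> I. parallel C f g \<longrightarrow> add C f g \<in> I) \<and>
     (\<forall>f \<in> I. neg C f \<in> I) \<and>
     (\<forall>f \<in> I. \<forall>g. cod C f = dom C g \<longrightarrow> comp C g f \<in> I) \<and>
     (\<forall>f \<in> I. \<forall>h. cod C h = dom C f \<longrightarrow> comp C f h \<in> I)"

definition Gh :: "('o,'m,'k) tcat \<Rightarrow> 'm set \<Rightarrow> 'm set" where
  "Gh C I = {f. \<forall>i \<in> I. cod C i = dom C f \<longrightarrow> comp C f i = zer C (dom C i) (cod C f)}"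

definition CoGh :: "('o,'m,'k) tcat \<Rightarrow> 'm set \<Rightarrow> 'm set" where
  "CoGh C I = {f. \<forall>i \<in> I. dom C i = cod C f \<longrightarrow> comp C i f = zer C (dom C f) (cod C i)}"

definition ideal_torsion_pair :: "('o,'m,'k) tcat \<Rightarrow> 'm set \<Rightarrow> 'm set \<Rightarrow> bool" where
  "ideal_torsion_pair C I R \<longleftrightarrow> is_ideal C I \<and> is_ideal C R \<and>
     (\<forall>i \<in> I. \<forall>r \<in> R. \<forall>g. g \<in> hom C (cod C i) (dom C r) \<longrightarrow>
        comp C r (comp C g i) = zer C (dom C i) (cod C r)) \<and>
     (\<forall>T. \<exists>X Y f g h. f \<in> I \<and> g \<in> R \<and> (X, T, Y, f, g, h) \<in> dist C)"

definition right_approx :: "('o,'m,'k) tcat \<Rightarrow> 'm set \<Rightarrow> 'o \<Rightarrow> 'm \<Rightarrow> bool" where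
  "right_approx C I T i \<longleftrightarrow> i \<in> I \<and> cod C i = T \<and>
     (\<forall>j \<in> I. cod C j = T \<longrightarrow> (\<exists>u \<in> hom C (dom C j) (dom C i). comp C i u = j))"

definition left_approx :: "('o,'m,'k) tcat \<Rightarrow> 'm set \<Rightarrow> 'o \<Rightarrow> 'm \<Rightarrow> bool" where
  "left_approx C I T i \<longleftrightarrow> i \<in> I \<and> dom C i = T \<and>
     (\<forall>j \<in> I. dom C j = T \<longrightarrow> (\<exists>u \<in> hom C (cod C i) (cod C j). comp C u i = j))"

definition contravariantly_finite :: "('o,'m,'k) tcat \<Rightarrow> 'm set \<Rightarrow> bool" where
  "contravariantly_finite C I \<longleftrightarrow> (\<forall>T. \<exists>i. right_approx C I T i)"

definition covariantly_finite :: "('o,'m,'k) tcat \<Rightarrow> 'm set \<Rightarrow> bool" where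
  "covariantly_finite C I \<longleftrightarrow> (\<forall>T. \<exists>i. left_approx C I T i)"

end

theory Submission
  imports Defs
begin

text \<open>Every object \<open>T\<close> lies in a distinguished triangle \<open>X \<rightarrow> T \<rightarrow> Y \<rightarrow> X[1]\<close> with first map
  \<open>f \<in> I\<close> and second map \<open>g \<in> R\<close>. In any triangulated category \<open>f\<close> is a weak kernel of \<open>g\<close>
  and \<open>g\<close> a weak cokernel of \<open>f\<close>. A coghost \<open>q\<close> of \<open>R\<close> ending at \<open>T\<close> satisfies \<open>g q = 0\<close>,
  so it factors through \<open>f\<close> and lies in the ideal \<open>I\<close>; since members of \<open>I\<close> are coghosts of \<open>R\<close>
  by orthogonality, the same factorisation makes \<open>f\<close> a right \<open>I\<close>-approximation. The statements
  about \<open>R\<close> are dual.\<close>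

locale klinear_category =
  fixes C :: "('o, 'm, 'k::field) tcat"
  assumes klinear: "is_klinear C"
begin

lemma dom_ident [simp]: "dom C (ident C X) = X"
  and cod_ident [simp]: "cod C (ident C X) = X"
  and comp_ident_right [simp]: "comp C f (ident C (dom C f)) = f"
  and comp_ident_left [simp]: "comp C (ident C (cod C f)) f = f"
  and dom_zer [simp]: "dom C (zer C X Y) = X"
  and cod_zer [simp]: "cod C (zer C X Y) = Y"
  and dom_neg [simp]: "dom C (neg C f) = dom C f"
  and cod_neg [simp]: "cod C (neg C f) = cod C f"
  and add_zer_right: "add C f (zer C (dom C f) (cod C f)) = f"
  and add_neg_right: "add C f (neg C f) = zer C (dom C f) (cod C f)"
  using klinear unfolding is_klinear_def is_category_def by simp_all

lemma dom_comp [simp]: "cod C f = dom C g \<Longrightarrow> dom C (comp C g f) = dom C f"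
  and cod_comp [simp]: "cod C f = dom C g \<Longrightarrow> cod C (comp C g f) = cod C g"
  using klinear unfolding is_klinear_def is_category_def by simp_all

lemma add_commute: "parallel C f g \<Longrightarrow> add C f g = add C g f"
  using klinear unfolding is_klinear_def by meson

lemma add_assoc: "parallel C f g \<Longrightarrow> parallel C g h \<Longrightarrow>
    add C (add C f g) h = add C f (add C g h)"
  using klinear unfolding is_klinear_def by meson

lemma comp_add_left: "cod C f = dom C g \<Longrightarrow> parallel C g g' \<Longrightarrow>
    comp C (add C g g') f = add C (comp C g f) (comp C g' f)"
  using klinear unfolding is_klinear_def by meson

lemma comp_add_right: "cod C f = dom C g \<Longrightarrow> parallel C f f' \<Longrightarrow>
    comp C g (add C f f') = add C (comp C g f) (comp C g f')"
  using klinear unfolding is_klinear_def by meson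

lemma parallel_refl [simp]: "parallel C f f"
  by (simp add: parallel_def)

lemma add_self_eq_zer:
  assumes "add C y y = y"
  shows "y = zer C (dom C y) (cod C y)"
proof -
  have "parallel C y (neg C y)"
    by (simp add: parallel_def)
  then have "zer C (dom C y) (cod C y) = add C y (add C y (neg C y))"
    using add_assoc[of y y "neg C y"] add_neg_right[of y] assms by simp
  also have "\<dots> = y"
    using add_neg_right[of y] add_zer_right[of y] by simp
  finally show ?thesis by simp
qed

lemma add_zer_zer: "add C (zer C X Y) (zer C X Y) = zer C X Y"
  using add_zer_right[of "zer C X Y"] by simp

lemma comp_zer_right:
  assumes "dom C g = Y"
  shows "comp C g (zer C X Y) = zer C X (cod C g)"
proof -
  let ?w = "comp C g (zer C X Y)"
  have "add C ?w ?w = ?w"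
    using comp_add_right[of "zer C X Y" g "zer C X Y"] add_zer_zer assms by simp
  then show ?thesis
    using add_self_eq_zer assms by fastforce
qed

lemma comp_zer_left:
  assumes "cod C f = Y"
  shows "comp C (zer C Y Z) f = zer C (dom C f) Z"
proof -
  let ?w = "comp C (zer C Y Z) f"
  have "add C ?w ?w = ?w"
    using comp_add_left[of f "zer C Y Z" "zer C Y Z"] add_zer_zer assms by simp
  then show ?thesis
    using add_self_eq_zer assms by fastforce
qed

lemma neg_unique:
  assumes ab: "parallel C a b" and sum: "add C a b = zer C (dom C a) (cod C a)"
  shows "b = neg C a"
proof -
  have na: "parallel C (neg C a) a"
    by (simp add: parallel_def)
  have "neg C a = add C (neg C a) (add C a b)"
    using sum add_zer_right[of "neg C a"] by simp
  also have "\<dots> = add C (add C a (neg C a)) b"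
    using add_assoc[OF na ab] add_commute[OF na] by simp
  also have "\<dots> = add C (zer C (dom C b) (cod C b)) b"
    using ab add_neg_right[of a] by (simp add: parallel_def)
  also have "\<dots> = b"
    using add_commute[of b "zer C (dom C b) (cod C b)"] add_zer_right[of b]
    by (simp add: parallel_def)
  finally show ?thesis by simp
qed

lemma neg_neg [simp]: "neg C (neg C a) = a"
proof -
  have "add C (neg C a) a = zer C (dom C (neg C a)) (cod C (neg C a))"
    using add_commute[of "neg C a" a] add_neg_right[of a] by (simp add: parallel_def)
  then show ?thesis
    using neg_unique[of "neg C a" a] by (simp add: parallel_def)
qed

lemma neg_zer [simp]: "neg C (zer C X Y) = zer C X Y"
  using neg_unique[of "zer C X Y" "zer C X Y"] add_zer_zer by simp

lemma comp_neg_right: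
  assumes fg: "cod C f = dom C g"
  shows "comp C g (neg C f) = neg C (comp C g f)"
proof (rule neg_unique)
  show "parallel C (comp C g f) (comp C g (neg C f))"
    using fg by (simp add: parallel_def)
  have "add C (comp C g f) (comp C g (neg C f)) = comp C g (zer C (dom C f) (cod C f))"
    using comp_add_right[OF fg, of "neg C f"] add_neg_right[of f] by (simp add: parallel_def)
  then show "add C (comp C g f) (comp C g (neg C f)) =
      zer C (dom C (comp C g f)) (cod C (comp C g f))"
    using comp_zer_right fg by simp
qed

lemma comp_neg_left:
  assumes fg: "cod C f = dom C g"
  shows "comp C (neg C g) f = neg C (comp C g f)"
proof (rule neg_unique)
  show "parallel C (comp C g f) (comp C (neg C g) f)"
    using fg by (simp add: parallel_def)
  have "add C (comp C g f) (comp C (neg C g) f) = comp C (zer C (dom C g) (cod C g)) f"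
    using comp_add_left[OF fg, of "neg C g"] add_neg_right[of g] by (simp add: parallel_def)
  then show "add C (comp C g f) (comp C (neg C g) f) =
      zer C (dom C (comp C g f)) (cod C (comp C g f))"
    using comp_zer_left fg by simp
qed

end

lemma is_dsum_Nil_iff: "is_dsum C Z [] \<longleftrightarrow> zer C Z Z = ident C Z"
  unfolding is_dsum_def by auto

locale triangulated_category =
  fixes C :: "('o, 'm, 'k::field) tcat"
  assumes triangulated: "is_triangulated C"

sublocale triangulated_category \<subseteq> klinear_category
  using triangulated unfolding is_triangulated_def is_additive_def
  by unfold_locales blast

context triangulated_category
begin

lemma zero_object_exists: "\<exists>Z. is_dsum C Z []"
  and dom_shM [simp]: "dom C (shM C f) = shO C (dom C f)"
  and cod_shM [simp]: "cod C (shM C f) = shO C (cod C f)"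
  and shM_ident: "shM C (ident C X) = ident C (shO C X)"
  using triangulated unfolding is_triangulated_def is_additive_def is_shift_def by simp_all

lemma shM_comp: "cod C f = dom C g \<Longrightarrow> shM C (comp C g f) = comp C (shM C g) (shM C f)"
  and shM_add: "parallel C f g \<Longrightarrow> shM C (add C f g) = add C (shM C f) (shM C g)"
  and shM_bij_betw: "bij_betw (shM C) (hom C X Y) (hom C (shO C X) (shO C Y))"
  using triangulated unfolding is_triangulated_def is_shift_def by meson+

lemma dist_homs:
  assumes "(X, Y, Z, f, g, h) \<in> dist C"
  shows "f \<in> hom C X Y" "g \<in> hom C Y Z" "h \<in> hom C Z (shO C X)"
  using assms triangulated unfolding is_triangulated_def is_triangle_def by fastforce+

lemma dist_identity:
  "is_dsum C Z [] \<Longrightarrow> (X, X, Z, ident C X, zer C X Z, zer C Z (shO C X)) \<in> dist C"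
  using triangulated unfolding is_triangulated_def by meson

lemma dist_rotate_iff:
  "(X, Y, Z, f, g, h) \<in> dist C \<longleftrightarrow> (Y, Z, shO C X, g, h, neg C (shM C f)) \<in> dist C"
  using triangulated unfolding is_triangulated_def by meson

lemma dist_morphism_completion:
  assumes "(X, Y, Z, f, g, h) \<in> dist C" "(X', Y', Z', f', g', h') \<in> dist C"
    and "a \<in> hom C X X'" "b \<in> hom C Y Y'" "comp C b f = comp C f' a"
  obtains c where "tri_morph C (X, Y, Z, f, g, h) (X', Y', Z', f', g', h') a b c"
  using assms triangulated unfolding is_triangulated_def by meson

lemma shM_zer [simp]: "shM C (zer C X Y) = zer C (shO C X) (shO C Y)"
proof -
  have "add C (shM C (zer C X Y)) (shM C (zer C X Y)) = shM C (zer C X Y)"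
    using shM_add[of "zer C X Y" "zer C X Y"] add_zer_zer by simp
  then show ?thesis
    using add_self_eq_zer by fastforce
qed

lemma shift_zero_object: "is_dsum C Z [] \<Longrightarrow> is_dsum C (shO C Z) []"
  by (metis is_dsum_Nil_iff shM_ident shM_zer)

lemma dist_zero_rotated:
  assumes "is_dsum C Z []"
  shows "(S, Z, shO C S, zer C S Z, zer C Z (shO C S), neg C (ident C (shO C S))) \<in> dist C"
  using dist_identity[OF assms, of S] dist_rotate_iff shM_ident by metis

lemma dist_zero_first:
  assumes "is_dsum C Z []"
  shows "(Z, S, S, zer C Z S, ident C S, zer C S (shO C Z)) \<in> dist C"
  using dist_identity[OF shift_zero_object[OF assms], of S]
    dist_rotate_iff[of Z S S "zer C Z S" "ident C S" "zer C S (shO C Z)"] by simp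

text \<open>TR3 maps the rotated trivial triangle \<open>S \<rightarrow> 0 \<rightarrow> S[1]\<close> into the rotated triangle
  \<open>T \<rightarrow> Y \<rightarrow> X[1]\<close> along \<open>(j, 0)\<close>; the third component is \<open>u[1]\<close> for the wanted \<open>u\<close>,
  because the shift is fully faithful.\<close>

lemma dist_weak_kernel:
  assumes d: "(X, T, Y, f, g, h) \<in> dist C"
    and j: "cod C j = T" and gj: "comp C g j = zer C (dom C j) Y"
  shows "\<exists>u \<in> hom C (dom C j) X. comp C f u = j"
proof -
  let ?S = "dom C j"
  obtain Z where Z: "is_dsum C Z []"
    using zero_object_exists by blast
  have f: "f \<in> hom C X T" and g: "g \<in> hom C T Y"
    using dist_homs[OF d] by simp_all
  obtain c where "tri_morph C
      (?S, Z, shO C ?S, zer C ?S Z, zer C Z (shO C ?S), neg C (ident C (shO C ?S)))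
      (T, Y, shO C X, g, h, neg C (shM C f)) j (zer C Z Y) c"
  proof (rule dist_morphism_completion)
    show "comp C (zer C Z Y) (zer C ?S Z) = comp C g j"
      using comp_zer_left gj by simp
  qed (use dist_zero_rotated[OF Z] d dist_rotate_iff j in \<open>auto simp: hom_def\<close>)
  then have c: "c \<in> hom C (shO C ?S) (shO C X)"
    and square: "comp C (shM C j) (neg C (ident C (shO C ?S))) = comp C (neg C (shM C f)) c"
    unfolding tri_morph_def by auto
  have "neg C (shM C j) = neg C (comp C (shM C f) c)"
    using square c f comp_neg_right[of "ident C (shO C ?S)" "shM C j"]
      comp_neg_left[of c "shM C f"] comp_ident_right[of "shM C j"] by (simp add: hom_def)
  then have shM_j: "shM C j = comp C (shM C f) c"
    by (metis neg_neg)
  obtain u where u: "u \<in> hom C ?S X" and c_eq: "c = shM C u"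
    using c shM_bij_betw[of ?S X] unfolding bij_betw_def by blast
  have fu: "comp C f u \<in> hom C ?S T"
    using u f by (simp add: hom_def)
  have "shM C j = shM C (comp C f u)"
    using shM_j c_eq shM_comp u f by (simp add: hom_def)
  then have "j = comp C f u"
    using fu j shM_bij_betw[of ?S T] unfolding bij_betw_def inj_on_def by (simp add: hom_def)
  then show ?thesis
    using u by blast
qed

lemma dist_weak_cokernel:
  assumes d: "(X, T, Y, f, g, h) \<in> dist C"
    and p: "dom C p = T" and pf: "comp C p f = zer C X (cod C p)"
  shows "\<exists>v \<in> hom C Y (cod C p). comp C v g = p"
proof -
  let ?S = "cod C p"
  obtain Z where Z: "is_dsum C Z []"
    using zero_object_exists by blast
  obtain c where "tri_morph C (X, T, Y, f, g, h)
      (Z, ?S, ?S, zer C Z ?S, ident C ?S, zer C ?S (shO C Z)) (zer C X Z) p c"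
  proof (rule dist_morphism_completion)
    show "comp C p f = comp C (zer C Z ?S) (zer C X Z)"
      using comp_zer_left pf by simp
  qed (use d dist_zero_first[OF Z] p in \<open>auto simp: hom_def\<close>)
  then have "c \<in> hom C Y ?S" "comp C c g = p"
    unfolding tri_morph_def by auto
  then show ?thesis
    by blast
qed

end

lemma ideal_comp_left: "is_ideal C I \<Longrightarrow> f \<in> I \<Longrightarrow> cod C f = dom C g \<Longrightarrow> comp C g f \<in> I"
  and ideal_comp_right: "is_ideal C I \<Longrightarrow> f \<in> I \<Longrightarrow> cod C h = dom C f \<Longrightarrow> comp C f h \<in> I"
  unfolding is_ideal_def by meson+

lemma GhD: "q \<in> Gh C I \<Longrightarrow> i \<in> I \<Longrightarrow> cod C i = dom C q \<Longrightarrow>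
    comp C q i = zer C (dom C i) (cod C q)"
  unfolding Gh_def by simp

lemma CoGhD: "q \<in> CoGh C R \<Longrightarrow> r \<in> R \<Longrightarrow> dom C r = cod C q \<Longrightarrow>
    comp C r q = zer C (dom C q) (cod C r)"
  unfolding CoGh_def by simp

locale triangulated_torsion_pair = triangulated_category C
  for C :: "('o, 'm, 'k::field) tcat" +
  fixes I R :: "'m set"
  assumes torsion_pair: "ideal_torsion_pair C I R"
begin

lemma ideal_I: "is_ideal C I"
  and ideal_R: "is_ideal C R"
  using torsion_pair unfolding ideal_torsion_pair_def by meson+

lemma torsion_triangle:
  obtains X Y f g h where "f \<in> I" "g \<in> R" "(X, T, Y, f, g, h) \<in> dist C"
  using torsion_pair unfolding ideal_torsion_pair_def by meson

lemma comp_torsion_eq_zer: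
  assumes "i \<in> I" "r \<in> R" "cod C i = dom C r"
  shows "comp C r i = zer C (dom C i) (cod C r)"
proof -
  have "ident C (cod C i) \<in> hom C (cod C i) (dom C r)"
    using assms(3) by (simp add: hom_def)
  then have "comp C r (comp C (ident C (cod C i)) i) = zer C (dom C i) (cod C r)"
    using torsion_pair assms(1,2) unfolding ideal_torsion_pair_def by meson
  then show ?thesis
    by simp
qed

lemma I_subset_CoGh: "I \<subseteq> CoGh C R"
  using comp_torsion_eq_zer unfolding CoGh_def by auto

lemma R_subset_Gh: "R \<subseteq> Gh C I"
  using comp_torsion_eq_zer unfolding Gh_def by auto

lemma CoGh_factors_through_torsion_triangle:
  assumes d: "(X, T, Y, f, g, h) \<in> dist C" and g: "g \<in> R"
    and q: "q \<in> CoGh C R" "cod C q = T"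
  shows "\<exists>u \<in> hom C (dom C q) X. comp C f u = q"
proof (rule dist_weak_kernel[OF d q(2)])
  have "dom C g = cod C q" "cod C g = Y"
    using q(2) dist_homs(2)[OF d] by (simp_all add: hom_def)
  then show "comp C g q = zer C (dom C q) Y"
    using CoGhD[OF q(1) g] by simp
qed

lemma Gh_factors_through_torsion_triangle:
  assumes d: "(X, T, Y, f, g, h) \<in> dist C" and f: "f \<in> I"
    and q: "q \<in> Gh C I" "dom C q = T"
  shows "\<exists>v \<in> hom C Y (cod C q). comp C v g = q"
proof (rule dist_weak_cokernel[OF d q(2)])
  have "cod C f = dom C q" "dom C f = X"
    using q(2) dist_homs(1)[OF d] by (simp_all add: hom_def)
  then show "comp C q f = zer C X (cod C q)"
    using GhD[OF q(1) f] by simp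
qed

lemma I_eq_CoGh: "I = CoGh C R"
proof
  show "CoGh C R \<subseteq> I"
  proof
    fix q assume q: "q \<in> CoGh C R"
    obtain X Y f g h where f: "f \<in> I" and g: "g \<in> R" and d: "(X, cod C q, Y, f, g, h) \<in> dist C"
      by (rule torsion_triangle)
    obtain u where u: "u \<in> hom C (dom C q) X" and q_eq: "comp C f u = q"
      using CoGh_factors_through_torsion_triangle[OF d g q] by blast
    have "cod C u = dom C f"
      using u dist_homs(1)[OF d] by (simp add: hom_def)
    then show "q \<in> I"
      using ideal_comp_right[OF ideal_I f] q_eq by blast
  qed
qed (rule I_subset_CoGh)

lemma R_eq_Gh: "R = Gh C I"
proof
  show "Gh C I \<subseteq> R"
  proof
    fix q assume q: "q \<in> Gh C I"
    obtain X Y f g h where f: "f \<in> I" and g: "g \<in> R" and d: "(X, dom C q, Y, f, g, h) \<in> dist C"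
      by (rule torsion_triangle)
    obtain v where v: "v \<in> hom C Y (cod C q)" and q_eq: "comp C v g = q"
      using Gh_factors_through_torsion_triangle[OF d f q] by blast
    have "cod C g = dom C v"
      using v dist_homs(2)[OF d] by (simp add: hom_def)
    then show "q \<in> R"
      using ideal_comp_left[OF ideal_R g] q_eq by blast
  qed
qed (rule R_subset_Gh)

lemma contravariantly_finite_I: "contravariantly_finite C I"
  unfolding contravariantly_finite_def
proof
  fix T
  obtain X Y f g h where f: "f \<in> I" and g: "g \<in> R" and d: "(X, T, Y, f, g, h) \<in> dist C"
    by (rule torsion_triangle)
  have "right_approx C I T f"
    unfolding right_approx_def
  proof (intro conjI ballI impI)
    show "cod C f = T"
      using dist_homs(1)[OF d] by (simp add: hom_def)
    fix j assume "j \<in> I" "cod C j = T"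
    then show "\<exists>u \<in> hom C (dom C j) (dom C f). comp C f u = j"
      using I_subset_CoGh CoGh_factors_through_torsion_triangle[OF d g] dist_homs(1)[OF d]
      by (auto simp: hom_def)
  qed (rule f)
  then show "\<exists>i. right_approx C I T i" ..
qed

lemma covariantly_finite_R: "covariantly_finite C R"
  unfolding covariantly_finite_def
proof
  fix T
  obtain X Y f g h where f: "f \<in> I" and g: "g \<in> R" and d: "(X, T, Y, f, g, h) \<in> dist C"
    by (rule torsion_triangle)
  have "left_approx C R T g"
    unfolding left_approx_def
  proof (intro conjI ballI impI)
    show "dom C g = T"
      using dist_homs(2)[OF d] by (simp add: hom_def)
    fix r assume "r \<in> R" "dom C r = T"
    then show "\<exists>v \<in> hom C (cod C g) (cod C r). comp C v g = r"
      using R_subset_Gh Gh_factors_through_torsion_triangle[OF d f] dist_homs(2)[OF d]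
      by (auto simp: hom_def)
  qed (rule g)
  then show "\<exists>r. left_approx C R T r" ..
qed

end

theorem proposition2p5:
  fixes C :: "('o, 'm, 'k::field) tcat" and I R :: "'m set"
  assumes "alg_closed TYPE('k)"
    and "is_triangulated C"
    and "hom_finite C"
    and "krull_schmidt C"
    and "ideal_torsion_pair C I R"
  shows "(I = CoGh C R \<and> R = Gh C I) \<and> contravariantly_finite C I \<and> covariantly_finite C R"
proof -
  interpret triangulated_torsion_pair C I R
    by (unfold_locales; fact)
  show ?thesis
    using I_eq_CoGh R_eq_Gh contravariantly_finite_I covariantly_finite_R by blast
qed

end
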